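(* Let $a,b,g,h>0$ with $h=g+b+a$. Then the Minkowskian planar 4R linkage with these link lengths is of crank–rocker type.
   Context: Link lengths: $a$ input crank, $b$ output crank, $g$ ground (fixed link), $h$ coupler. Put $T_1=g+b-h-a$, $T_2=a-g+b-h$, $T_3=g-a-b-h$, $T_4=g-a+b+h$, $T_5=a-h+g+b$. The input crank is a crank if $T_1T_2\ge0$ and $T_3T_4\le0$, a rocker if $T_1T_2<0$ and $T_3T_4\le0$, and a superrocker if $T_1T_2<0$ and $T_3T_4>0$. The output crank is a crank if $T_1\ge0$ and $T_4T_5\ge0$, a rocker if $T_1<0$ and $T_4T_5\ge0$, and a superrocker if $T_1<0$ and $T_4T_5<0$. The linkage is of type "X–Y" if its input crank is of type X and its output crank of type Y. *)

theory Defs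
  imports Main "HOL.Real"
begin

text \<open>Planar 4R linkage: a input crank, b output crank, g ground, h coupler.\<close>

datatype link_type = Crank | Rocker | Superrocker | Undefined_type

definition T1 :: "real \<Rightarrow> real \<Rightarrow> real \<Rightarrow> real \<Rightarrow> real" where
  "T1 a b g h = g + b - h - a"
definition T2 :: "real \<Rightarrow> real \<Rightarrow> real \<Rightarrow> real \<Rightarrow> real" where
  "T2 a b g h = a - g + b - h"
definition T3 :: "real \<Rightarrow> real \<Rightarrow> real \<Rightarrow> real \<Rightarrow> real" where
  "T3 a b g h = g - a - b - h"
definition T4 :: "real \<Rightarrow> real \<Rightarrow> real \<Rightarrow> real \<Rightarrow> real" where
  "T4 a b g h = g - a + b + h"
definition T5 :: "real \<Rightarrow> real \<Rightarrow> real \<Rightarrow> real \<Rightarrow> real" where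
  "T5 a b g h = a - h + g + b"

definition input_type :: "real \<Rightarrow> real \<Rightarrow> real \<Rightarrow> real \<Rightarrow> link_type" where
  "input_type a b g h =
    (if T1 a b g h * T2 a b g h \<ge> 0 \<and> T3 a b g h * T4 a b g h \<le> 0 then Crank
     else if T1 a b g h * T2 a b g h < 0 \<and> T3 a b g h * T4 a b g h \<le> 0 then Rocker
     else if T1 a b g h * T2 a b g h < 0 \<and> T3 a b g h * T4 a b g h > 0 then Superrocker
     else Undefined_type)"

definition output_type :: "real \<Rightarrow> real \<Rightarrow> real \<Rightarrow> real \<Rightarrow> link_type" where
  "output_type a b g h =
    (if T1 a b g h \<ge> 0 \<and> T4 a b g h * T5 a b g h \<ge> 0 then Crank
     else if T1 a b g h < 0 \<and> T4 a b g h * T5 a b g h \<ge> 0 then Rocker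
     else if T1 a b g h < 0 \<and> T4 a b g h * T5 a b g h < 0 then Superrocker
     else Undefined_type)"

definition linkage_type :: "real \<Rightarrow> real \<Rightarrow> real \<Rightarrow> real \<Rightarrow> link_type \<times> link_type" where
  "linkage_type a b g h = (input_type a b g h, output_type a b g h)"

end

theory Submission
  imports Defs
begin

text \<open>If the coupler is as long as the other three links together, then \<open>T1 = -2a\<close> and
  \<open>T2 = -2g\<close> share a sign, \<open>T3 = -2(a+b)\<close> and \<open>T4 = 2(g+b)\<close> do not, and \<open>T5 = 0\<close>; so
  the input crank is a crank and the output crank is a rocker as soon as \<open>a > 0\<close>.\<close>

lemma input_type_coupler_sum:
  fixes a b g :: real
  assumes "a \<ge> 0" "b \<ge> 0" "g \<ge> 0"
  shows "input_type a b g (g + b + a) = Crank"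
proof -
  have "T1 a b g (g + b + a) * T2 a b g (g + b + a) = 4 * (a * g)"
    and "T3 a b g (g + b + a) * T4 a b g (g + b + a) = - (4 * ((a + b) * (g + b)))"
    by (simp_all add: T1_def T2_def T3_def T4_def algebra_simps)
  moreover have "a * g \<ge> 0" and "(a + b) * (g + b) \<ge> 0"
    using assms by simp_all
  ultimately have "T1 a b g (g + b + a) * T2 a b g (g + b + a) \<ge> 0"
    and "T3 a b g (g + b + a) * T4 a b g (g + b + a) \<le> 0"
    by simp_all
  then show ?thesis
    by (simp add: input_type_def)
qed

lemma output_type_coupler_sum:
  fixes a b g :: real
  assumes "a > 0"
  shows "output_type a b g (g + b + a) = Rocker"
proof -
  have "T1 a b g (g + b + a) = - 2 * a" and "T5 a b g (g + b + a) = 0"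
    by (simp_all add: T1_def T5_def)
  then show ?thesis
    using assms by (simp add: output_type_def)
qed

theorem mainTheorem15:
  fixes a b g h :: real
  assumes "a > 0" and "b > 0" and "g > 0" and "h > 0"
    and "h = g + b + a"
  shows "linkage_type a b g h = (Crank, Rocker)"
  using assms input_type_coupler_sum output_type_coupler_sum
  by (simp add: linkage_type_def)

end
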